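(* Let $C_n(a,b)$ be a connected $2$-regular circulant digraph, let $l\ge1$, $0\le k\le l$ with $la+k(b-a)=\omega n$ for an integer $\omega$, and let $w\in\mathbb{W}_2(l,k)$ with $w=x^r$ where $r$ is the repetition number of $w$. Then for any vertex $v$, the periodic orbit $p=\varphi(w,v)$ is primitive if and only if $\gcd(r,\omega)=1$. More generally, if $p=q^t$ for some periodic orbit $q$ and positive integer $t$, then $q$ is primitive if and only if $t=\gcd(r,\omega)$.
   Context: Let $n\ge 2$ and $0<a<b<n$ be integers with $\gcd(n,a,b)=1$. $C_n(a,b)$ has vertex set $\mathbb{Z}_n$ and directed bonds $(v,v+a)$, $(v,v+b)$ (addition mod $n$), with step sizes $a$, $b$. A path of length $l$ is a sequence of bonds $(e_1,\dots,e_l)$ with the terminus of $e_j$ equal to the origin of $e_{j+1}$; its $b$-count is the number of bonds of step size $b$; its step sequence is the sequence of step sizes; a circuit is a path whose last terminus equals its first origin. A periodic orbit is an equivalence class of circuits under cyclic rotation $(e_1,\dots,e_l)\mapsto(e_2,\dots,e_l,e_1)$. For a circuit $c$, $c^t$ is the concatenation of $t$ copies, and for an orbit $q=[c]$, $q^t=[c^t]$. An orbit is primitive if it is not $[c_0^r]$ for a circuit $c_0$ and $r>1$. $\mathbb{W}_2(l,k)$ is the set of words over $\{a,b\}$ of length $l$ with exactly $k$ letters $b$; the repetition number of a word $w$ is the largest $r$ with $w=x^r$ for some word $x$ (then $x$ is primitive, i.e., not a proper power). Identifying letters $a,b$ with step sizes $a,b$, $\psi(w,v)$ is the unique path starting at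 vertex $v$ with step sequence $w$; when it is a circuit, $\varphi(w,v)=[\psi(w,v)]$. *)

theory Defs
  imports Main
begin

(* Circulant digraph C_n(a,b): vertices {0..<n} (representing Z_n),
   a bond is a pair (origin, terminus). *)

type_synonym bond = "nat \<times> nat"

definition is_bond :: "nat \<Rightarrow> nat \<Rightarrow> nat \<Rightarrow> bond \<Rightarrow> bool" where
  "is_bond n a b e \<longleftrightarrow> fst e < n \<and>
     (snd e = (fst e + a) mod n \<or> snd e = (fst e + b) mod n)"

definition is_path :: "nat \<Rightarrow> nat \<Rightarrow> nat \<Rightarrow> bond list \<Rightarrow> bool" where
  "is_path n a b p \<longleftrightarrow> (\<forall>e\<in>set p. is_bond n a b e) \<and>
     (\<forall>j. Suc j < length p \<longrightarrow> snd (p ! j) = fst (p ! Suc j))"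

definition is_circuit :: "nat \<Rightarrow> nat \<Rightarrow> nat \<Rightarrow> bond list \<Rightarrow> bool" where
  "is_circuit n a b c \<longleftrightarrow> is_path n a b c \<and> c \<noteq> [] \<and> snd (last c) = fst (hd c)"

definition orbit :: "bond list \<Rightarrow> bond list set" where
  "orbit c = {rotate k c | k. True}"

definition cpow :: "bond list \<Rightarrow> nat \<Rightarrow> bond list" where
  "cpow c t = concat (replicate t c)"

definition is_orbit :: "nat \<Rightarrow> nat \<Rightarrow> nat \<Rightarrow> bond list set \<Rightarrow> bool" where
  "is_orbit n a b q \<longleftrightarrow> (\<exists>c. is_circuit n a b c \<and> q = orbit c)"

definition primitive_orbit :: "nat \<Rightarrow> nat \<Rightarrow> nat \<Rightarrow> bond list set \<Rightarrow> bool" where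
  "primitive_orbit n a b q \<longleftrightarrow>
     \<not> (\<exists>c0 r. is_circuit n a b c0 \<and> r > 1 \<and> q = orbit (cpow c0 r))"

datatype letter = LA | LB

definition W2 :: "nat \<Rightarrow> nat \<Rightarrow> letter list set" where
  "W2 l k = {w. length w = l \<and> length (filter (\<lambda>x. x = LB) w) = k}"

definition rep_num :: "letter list \<Rightarrow> nat" where
  "rep_num w = (GREATEST r. \<exists>x. w = concat (replicate r x))"

definition step_size :: "nat \<Rightarrow> nat \<Rightarrow> letter \<Rightarrow> nat" where
  "step_size a b s = (case s of LA \<Rightarrow> a | LB \<Rightarrow> b)"

fun psi :: "nat \<Rightarrow> nat \<Rightarrow> nat \<Rightarrow> letter list \<Rightarrow> nat \<Rightarrow> bond list" where
  "psi n a b [] v = []"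
| "psi n a b (s # w) v =
     (v, (v + step_size a b s) mod n) # psi n a b w ((v + step_size a b s) mod n)"

definition phi :: "nat \<Rightarrow> nat \<Rightarrow> nat \<Rightarrow> letter list \<Rightarrow> nat \<Rightarrow> bond list set" where
  "phi n a b w v = orbit (psi n a b w v)"

end

theory Submission
  imports Defs
begin

text \<open>
  The rotations fixing a circuit \<open>c\<close> are the multiples of a least period \<open>e\<close> dividing
  \<open>|c|\<close>, and then \<open>[c] = [c\<^sub>0 ^ (|c| / e)]\<close> with \<open>[c\<^sub>0]\<close> primitive; so everything
  reduces to computing \<open>e\<close> for \<open>c = \<psi>(w,v)\<close>. Since the path determines its step sequence
  (this uses \<open>a < b < n\<close>, not connectedness), rotation by \<open>k\<close> fixes \<open>c\<close> iff it fixes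
  \<open>w = x\<^sup>r\<close> and returns to \<open>v\<close>. The first means \<open>k = j|x|\<close>, as \<open>r\<close> is the repetition
  number; the second means that \<open>n\<close> divides \<open>jD\<close>, where \<open>D\<close> is the displacement of \<open>x\<close>
  and \<open>rD = \<omega>n\<close>, i.e. that \<open>r / gcd(r,\<omega>)\<close> divides \<open>j\<close>. Hence \<open>e = |x| r / gcd(r,\<omega>)\<close>
  and \<open>\<phi>(w,v)\<close> is the \<open>gcd(r,\<omega>)\<close>-th power of a primitive orbit.
\<close>

section \<open>Rotations and powers of lists\<close>

lemma rotate_eq_rotate_iff: "rotate k xs = rotate k ys \<longleftrightarrow> xs = ys"
  by (induction k) (simp_all add: inj_rotate1[THEN inj_eq])

lemma rotate_fixed_rotate_iff: "rotate k (rotate j xs) = rotate j xs \<longleftrightarrow> rotate k xs = xs"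
  by (metis rotate_rotate add.commute rotate_eq_rotate_iff)

lemma rotate_mult_fixed: "rotate k xs = xs \<Longrightarrow> rotate (m * k) xs = xs"
  by (induction m) (simp_all flip: rotate_rotate)

lemma rotate_gcd_fixed:
  assumes "rotate k xs = xs" and "rotate m xs = xs"
  shows "rotate (gcd k m) xs = xs"
proof (cases "k = 0")
  case False
  then obtain x y where bezout: "x * k = y * m + gcd k m"
    using bezout_nat by (metis mult.commute)
  have "xs = rotate (x * k) xs" using rotate_mult_fixed[OF assms(1)] by simp
  also have "\<dots> = rotate (gcd k m) (rotate (y * m) xs)" by (simp add: bezout rotate_rotate add.commute)
  also have "\<dots> = rotate (gcd k m) xs" using rotate_mult_fixed[OF assms(2)] by simp
  finally show ?thesis by simp
qed (use assms in simp)

lemma length_concat_replicate [simp]: "length (concat (replicate t c)) = t * length c"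
  by (induction t) auto

lemma rotate1_concat_replicate:
  "rotate1 (concat (replicate t c)) = concat (replicate t (rotate1 c))"
proof (cases c)
  case (Cons h u)
  have "concat (replicate t (h # u)) @ [h] = h # concat (replicate t (u @ [h]))"
    by (induction t) auto
  then show ?thesis using Cons by (cases t) auto
qed simp

lemma rotate_concat_replicate:
  "rotate k (concat (replicate t c)) = concat (replicate t (rotate k c))"
  by (induction k) (simp_all add: rotate1_concat_replicate)

lemma concat_replicate_eq_iff:
  assumes "t > 0" and "length c = length c'"
  shows "concat (replicate t c) = concat (replicate t c') \<longleftrightarrow> c = c'"
  using assms by (metis gr0_conv_Suc replicate_Suc concat.simps(2) append_eq_append_conv)

lemma take_concat_replicate:
  "j \<le> r \<Longrightarrow> take (j * length x) (concat (replicate r x)) = concat (replicate j x)"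
  by (metis le_add_diff_inverse replicate_add concat_append length_concat_replicate
      append_eq_conv_conj)

lemma rotate_concat_replicate_fixed_iff:
  "t > 0 \<Longrightarrow> rotate k (concat (replicate t c)) = concat (replicate t c) \<longleftrightarrow> rotate k c = c"
  by (simp add: rotate_concat_replicate concat_replicate_eq_iff)

lemma commuting_eq_concat_replicate:
  assumes "y @ u = u @ y" and "length y = q * length u"
  shows "y = concat (replicate q u)"
  using assms
proof (induction q arbitrary: y)
  case (Suc q)
  have "take (length u) y = take (length u) (y @ u)" using Suc.prems(2) by simp
  also have "\<dots> = u" unfolding Suc.prems(1) by simp
  finally obtain y' where y: "y = u @ y'" by (metis append_take_drop_id)
  have "y' = concat (replicate q u)"
    using Suc.IH[of y'] Suc.prems y by simp
  then show ?case using y by simp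
qed simp

lemma rotate_fixed_imp_concat_replicate:
  assumes "d > 0" and "d dvd length c" and "rotate d c = c"
  shows "c = concat (replicate (length c div d) (take d c))"
proof (cases "c = []")
  case False
  obtain q where q: "length c = Suc q * d"
    using assms(2) False by (metis dvdE mult.commute not0_implies_Suc mult_0 length_0_conv)
  have "drop d c @ take d c = take d c @ drop d c"
  proof (cases "d < length c")
    case True
    then show ?thesis using assms(3) by (metis append_take_drop_id rotate_drop_take mod_less)
  qed simp
  moreover have "length (drop d c) = q * length (take d c)" using q by simp
  ultimately have "drop d c = concat (replicate q (take d c))"
    by (rule commuting_eq_concat_replicate)
  then show ?thesis using q assms(1) by (metis append_take_drop_id concat.simps(2) replicate_Suc
        nonzero_mult_div_cancel_right less_not_refl2)
qed simp

lemma rotate_fixed_iff_dvd_root: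
  assumes w: "w = concat (replicate r x)" and "x \<noteq> []"
    and maximal: "\<And>q y. w = concat (replicate q y) \<Longrightarrow> q \<le> r"
  shows "rotate k w = w \<longleftrightarrow> length x dvd k"
proof
  assume "rotate k w = w"
  moreover have "rotate (length x) w = w" using w by (simp add: rotate_concat_replicate)
  ultimately have fixed: "rotate (gcd k (length x)) w = w" by (rule rotate_gcd_fixed)
  define d where "d = gcd k (length x)"
  obtain m where m: "length x = d * m" unfolding d_def by (metis gcd_dvd2 dvdE)
  have "d > 0" using \<open>x \<noteq> []\<close> by (simp add: d_def)
  have "r > 0" using maximal[of 1 w] by simp
  have "d dvd length w" using m w by simp
  with \<open>d > 0\<close> have "w = concat (replicate (length w div d) (take d w))"
    using fixed unfolding d_def by (rule rotate_fixed_imp_concat_replicate)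
  then have "r * m \<le> r * 1" using maximal m w \<open>d > 0\<close> by auto
  then have "d = length x" using m \<open>r > 0\<close> \<open>x \<noteq> []\<close> by (cases m) auto
  then show "length x dvd k" unfolding d_def by (metis gcd_dvd1)
next
  assume "length x dvd k"
  then show "rotate k w = w"
    using w rotate_mult_fixed[of "length x" x] by (auto simp: rotate_concat_replicate mult.commute)
qed

section \<open>Primitive orbits\<close>

lemma orbit_eq_imp_rotate: "orbit c = orbit c' \<Longrightarrow> \<exists>j. c = rotate j c'"
proof -
  assume "orbit c = orbit c'"
  moreover have "c \<in> orbit c" unfolding orbit_def by (metis (mono_tags) mem_Collect_eq rotate0 id_apply)
  ultimately show ?thesis unfolding orbit_def by auto
qed

lemma length_eq_if_orbit_eq: "orbit c = orbit c' \<Longrightarrow> length c = length c'"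
  by (metis orbit_eq_imp_rotate length_rotate)

lemma orbit_cpow_rotate_fixed_iff:
  assumes "orbit c = orbit (cpow c' t)" and "t > 0"
  shows "rotate k c = c \<longleftrightarrow> rotate k c' = c'"
proof -
  obtain j where "c = rotate j (concat (replicate t c'))"
    using orbit_eq_imp_rotate[OF assms(1)] unfolding cpow_def by blast
  then show ?thesis
    using assms(2) by (simp add: rotate_fixed_rotate_iff rotate_concat_replicate_fixed_iff)
qed

lemma is_path_Cons:
  "is_path n a b (e # c) \<longleftrightarrow>
     is_bond n a b e \<and> is_path n a b c \<and> (c \<noteq> [] \<longrightarrow> snd e = fst (hd c))"
  by (auto simp: is_path_def nth_Cons hd_conv_nth split: nat.splits)

lemma is_path_Nil [simp]: "is_path n a b []"
  by (simp add: is_path_def)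

lemma is_path_append:
  "is_path n a b (u @ u') \<longleftrightarrow> is_path n a b u \<and> is_path n a b u' \<and>
     (u \<noteq> [] \<and> u' \<noteq> [] \<longrightarrow> snd (last u) = fst (hd u'))"
proof (induction u)
  case (Cons e u)
  then show ?case by (cases u) (auto simp: is_path_Cons)
qed simp

lemma is_circuit_root:
  assumes "is_path n a b (concat (replicate q u))" and "q > 1" and "u \<noteq> []"
  shows "is_circuit n a b u"
proof -
  obtain q' where "concat (replicate q u) = u @ u @ concat (replicate q' u)"
    using \<open>q > 1\<close>
    by (metis append.assoc concat.simps(2) replicate_Suc Suc_lessE gr0_conv_Suc One_nat_def)
  then show ?thesis using assms by (simp add: is_circuit_def is_path_append)
qed

lemma primitive_orbit_iff_no_proper_rotation:
  assumes "is_circuit n a b c"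
  shows "primitive_orbit n a b (orbit c) \<longleftrightarrow> (\<forall>k. 0 < k \<and> k < length c \<longrightarrow> rotate k c \<noteq> c)"
proof
  assume primitive: "primitive_orbit n a b (orbit c)"
  show "\<forall>k. 0 < k \<and> k < length c \<longrightarrow> rotate k c \<noteq> c"
  proof (intro allI impI notI)
    fix k assume k: "0 < k \<and> k < length c" and "rotate k c = c"
    define d where "d = gcd k (length c)"
    have "rotate d c = c" unfolding d_def by (rule rotate_gcd_fixed[OF \<open>rotate k c = c\<close>]) simp
    moreover have "d > 0" "d dvd length c" using k by (simp_all add: d_def)
    ultimately have c: "c = concat (replicate (length c div d) (take d c))"
      by (intro rotate_fixed_imp_concat_replicate)
    have "d \<le> k" using k gcd_le1_nat[of k "length c"] by (simp add: d_def)
    then have "d < length c" using k by linarith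
    then have "length c div d > 1" using \<open>d dvd length c\<close> \<open>d > 0\<close> by (auto elim!: dvdE)
    moreover have "is_circuit n a b (take d c)"
      using assms c \<open>d > 0\<close> \<open>length c div d > 1\<close>
      by (intro is_circuit_root[of _ _ _ "length c div d"]) (auto simp: is_circuit_def)
    moreover have "orbit c = orbit (cpow (take d c) (length c div d))"
      unfolding cpow_def using arg_cong[OF c, of orbit] .
    ultimately show False
      using primitive unfolding primitive_orbit_def by blast
  qed
next
  assume no_rotation: "\<forall>k. 0 < k \<and> k < length c \<longrightarrow> rotate k c \<noteq> c"
  show "primitive_orbit n a b (orbit c)"
    unfolding primitive_orbit_def
  proof
    assume "\<exists>c0 t. is_circuit n a b c0 \<and> t > 1 \<and> orbit c = orbit (cpow c0 t)"
    then obtain c0 t where c0: "is_circuit n a b c0" "t > 1"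
      and "orbit c = orbit (concat (replicate t c0))"
      unfolding cpow_def by blast
    then obtain j where c: "c = rotate j (concat (replicate t c0))"
      using orbit_eq_imp_rotate by blast
    then have "rotate (length c0) c = c" by (simp add: rotate_fixed_rotate_iff rotate_concat_replicate)
    moreover have "0 < length c0" "length c0 < length c" using c0 c by (auto simp: is_circuit_def)
    ultimately show False using no_rotation by blast
  qed
qed

lemma primitive_orbit_iff_period:
  assumes "is_circuit n a b c" and "e > 0" and period: "\<And>k. rotate k c = c \<longleftrightarrow> e dvd k"
  shows "primitive_orbit n a b (orbit c) \<longleftrightarrow> e = length c"
proof -
  have "e dvd length c" using period[of "length c"] by simp
  moreover have "c \<noteq> []" using assms(1) by (simp add: is_circuit_def)
  ultimately have "e \<le> length c" by (simp add: dvd_imp_le)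
  have "(\<forall>k. 0 < k \<and> k < length c \<longrightarrow> \<not> e dvd k) \<longleftrightarrow> e = length c"
  proof
    assume "\<forall>k. 0 < k \<and> k < length c \<longrightarrow> \<not> e dvd k"
    then show "e = length c" using \<open>e > 0\<close> \<open>e \<le> length c\<close> by (metis dvd_refl le_neq_implies_less)
  qed (auto dest: dvd_imp_le)
  then show ?thesis
    using primitive_orbit_iff_no_proper_rotation[OF assms(1)] period by simp
qed

section \<open>The circuit \<open>\<psi>(w,v)\<close>\<close>

definition step_sum :: "nat \<Rightarrow> nat \<Rightarrow> letter list \<Rightarrow> nat" where
  "step_sum a b u = sum_list (map (step_size a b) u)"

lemma step_sum_simps [simp]:
  "step_sum a b [] = 0"
  "step_sum a b (s # u) = step_size a b s + step_sum a b u"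
  "step_sum a b (u @ u') = step_sum a b u + step_sum a b u'"
  "step_sum a b (concat (replicate j u)) = j * step_sum a b u"
  by (induction j) (auto simp: step_sum_def)

lemma step_sum_count:
  "int (step_sum a b u) =
     int (length u) * int a + int (length (filter (\<lambda>x. x = LB) u)) * (int b - int a)"
  by (induction u) (auto simp: step_size_def algebra_simps split: letter.splits)

lemma length_psi [simp]: "length (psi n a b u p) = length u"
  by (induction u arbitrary: p) auto

lemma psi_eq_Nil_iff [simp]: "psi n a b u p = [] \<longleftrightarrow> u = []"
  by (cases u) auto

lemma fst_hd_psi: "u \<noteq> [] \<Longrightarrow> fst (hd (psi n a b u p)) = p"
  by (cases u) auto

lemma psi_append:
  "p < n \<Longrightarrow> psi n a b (u @ u') p = psi n a b u p @ psi n a b u' ((p + step_sum a b u) mod n)"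
  by (induction u arbitrary: p) (simp_all add: mod_add_left_eq add.assoc)

lemma is_path_psi: "p < n \<Longrightarrow> is_path n a b (psi n a b u p)"
proof (induction u arbitrary: p)
  case (Cons s u)
  then show ?case
    by (cases s) (auto simp: is_path_Cons is_bond_def step_size_def fst_hd_psi)
qed simp

lemma snd_last_psi:
  "u \<noteq> [] \<Longrightarrow> p < n \<Longrightarrow> snd (last (psi n a b u p)) = (p + step_sum a b u) mod n"
proof (induction u arbitrary: p)
  case (Cons s u)
  show ?case
  proof (cases "u = []")
    case False
    have "(p + step_size a b s) mod n < n" using \<open>p < n\<close> by simp
    from Cons.IH[OF False this] False show ?thesis by (simp add: mod_add_left_eq add.assoc)
  qed simp
qed simp

lemma add_mod_eq_self_iff: "(p::nat) < n \<Longrightarrow> (p + m) mod n = p \<longleftrightarrow> n dvd m"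
  by (metis mod_less mod_eq_dvd_iff_nat add_diff_cancel_left' le_add1)

lemma is_circuit_psi:
  "u \<noteq> [] \<Longrightarrow> p < n \<Longrightarrow> n dvd step_sum a b u \<Longrightarrow> is_circuit n a b (psi n a b u p)"
  by (simp add: is_circuit_def is_path_psi snd_last_psi fst_hd_psi add_mod_eq_self_iff)

lemma psi_inj:
  assumes "a < b" and "b < n" and "psi n a b u p = psi n a b u' p'"
  shows "u = u'"
  using assms(3)
proof (induction u arbitrary: u' p p')
  case Nil
  then show ?case by (metis psi_eq_Nil_iff)
next
  case (Cons s u)
  then obtain s' u'' where u': "u' = s' # u''" by (cases u') auto
  with Cons.prems have "(p + step_size a b s) mod n = (p + step_size a b s') mod n" "p = p'"
    by auto
  moreover have "(p + a) mod n \<noteq> (p + b) mod n"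
  proof
    assume "(p + a) mod n = (p + b) mod n"
    then have "a mod n = b mod n" by (simp add: nat_mod_eq_iff)
    then show False using assms(1,2) by simp
  qed
  ultimately have "s = s'" by (cases s; cases s') (auto simp: step_size_def)
  then show ?case using Cons u' by auto
qed

lemma rotate_psi:
  assumes "p < n" and "n dvd step_sum a b w" and "j < length w"
  shows "rotate j (psi n a b w p) = psi n a b (rotate j w) ((p + step_sum a b (take j w)) mod n)"
proof -
  let ?q = "(p + step_sum a b (take j w)) mod n"
  have "rotate j (psi n a b w p) = psi n a b (drop j w) ?q @ psi n a b (take j w) p"
    using psi_append[OF assms(1), where u = "take j w" and u' = "drop j w"] assms(3)
    by (metis append_take_drop_id length_psi length_take min.absorb4 less_imp_le_nat rotate_append)
  also have "\<dots> = psi n a b (drop j w @ take j w) ?q"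
  proof -
    have "(?q + step_sum a b (drop j w)) mod n = (p + step_sum a b w) mod n"
      by (metis mod_add_left_eq add.assoc step_sum_simps(3) append_take_drop_id)
    also have "\<dots> = p" using assms(1,2) add_mod_eq_self_iff by blast
    finally show ?thesis using psi_append[of ?q n] assms(1) by simp
  qed
  finally show ?thesis using assms(3) by (simp add: rotate_drop_take)
qed

lemma rotate_psi_fixed_iff:
  assumes "a < b" and "b < n" and "p < n" and "n dvd step_sum a b w" and "k < length w"
  shows "rotate k (psi n a b w p) = psi n a b w p \<longleftrightarrow>
           rotate k w = w \<and> n dvd step_sum a b (take k w)"
proof -
  let ?q = "(p + step_sum a b (take k w)) mod n"
  have "rotate k (psi n a b w p) = psi n a b w p \<longleftrightarrow> psi n a b (rotate k w) ?q = psi n a b w p"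
    using rotate_psi[OF assms(3,4,5)] by simp
  also have "\<dots> \<longleftrightarrow> rotate k w = w \<and> ?q = p"
    using psi_inj[OF assms(1,2)] fst_hd_psi assms(5) by (metis list.size(3) not_less0 rotate_is_Nil_conv)
  also have "\<dots> \<longleftrightarrow> rotate k w = w \<and> n dvd step_sum a b (take k w)"
    using assms(3) by (simp add: add_mod_eq_self_iff)
  finally show ?thesis .
qed

lemma dvd_mult_iff_div_gcd_dvd:
  assumes "(r::nat) > 0"
  shows "r dvd j * W \<longleftrightarrow> r div gcd r W dvd j"
proof -
  obtain r' W' where r: "r = gcd r W * r'" and W: "W = gcd r W * W'" and "coprime r' W'"
    using gcd_coprime_exists[of r W] assms by (auto simp: mult.commute)
  have "r dvd j * W \<longleftrightarrow> r' dvd j * W'"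
    using assms by (subst r, subst (2) W) (simp add: mult.left_commute)
  also have "\<dots> \<longleftrightarrow> r' dvd j" using \<open>coprime r' W'\<close> by (simp add: coprime_dvd_mult_left_iff)
  finally show ?thesis using assms r by (metis gcd_pos_nat nonzero_mult_div_cancel_left less_not_refl2)
qed

lemma dvd_mult_iff_div_gcd_dvd':
  assumes "(n::nat) > 0" and "r > 0" and "r * D = W * n"
  shows "n dvd j * D \<longleftrightarrow> r div gcd r W dvd j"
proof -
  have "n dvd j * D \<longleftrightarrow> r * n dvd r * (j * D)" using \<open>r > 0\<close> by simp
  also have "r * (j * D) = n * (j * W)" using assms(3) by (metis mult.commute mult.left_commute)
  also have "r * n dvd n * (j * W) \<longleftrightarrow> r dvd j * W" using \<open>n > 0\<close> by (simp add: mult.commute)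
  finally show ?thesis using dvd_mult_iff_div_gcd_dvd[OF \<open>r > 0\<close>] by simp
qed

lemma rotate_psi_fixed_iff_dvd:
  assumes "a < b" and "b < n" and "p < n"
    and w: "w = concat (replicate r x)" and "x \<noteq> []"
    and maximal: "\<And>q y. w = concat (replicate q y) \<Longrightarrow> q \<le> r"
    and closed: "r * step_sum a b x = W * n"
  shows "rotate k (psi n a b w p) = psi n a b w p \<longleftrightarrow> length x * (r div gcd r W) dvd k"
proof -
  define e where "e = length x * (r div gcd r W)"
  have "r > 0" using maximal[of 1 w] by simp
  have "n > 0" using assms(3) by simp
  have "n dvd step_sum a b w" using w closed by simp
  have "r div gcd r W dvd r" by (metis dvd_div_mult_self gcd_dvd1 dvd_triv_left)
  then have "e dvd length w" using w by (simp add: e_def mult.commute)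
  note return_iff = dvd_mult_iff_div_gcd_dvd'[OF \<open>n > 0\<close> \<open>r > 0\<close> closed]
  have small: "rotate k (psi n a b w p) = psi n a b w p \<longleftrightarrow> e dvd k"
    if "k < length w" for k
  proof -
    have "rotate k w = w \<and> n dvd step_sum a b (take k w) \<longleftrightarrow>
            (\<exists>j. k = j * length x \<and> n dvd j * step_sum a b x)"
    proof -
      have "take (j * length x) w = concat (replicate j x)" if "j * length x < length w" for j
        using that w take_concat_replicate[of j r x] by simp
      then show ?thesis
        using rotate_fixed_iff_dvd_root[OF w \<open>x \<noteq> []\<close> maximal] \<open>k < length w\<close>
        by (auto elim!: dvdE simp: mult.commute)
    qed
    then show ?thesis
      using rotate_psi_fixed_iff[OF assms(1-3) \<open>n dvd step_sum a b w\<close> that] return_iff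
      by (auto simp: e_def elim!: dvdE)
  qed
  have "rotate k (psi n a b w p) = rotate (k mod length w) (psi n a b w p)"
    by (metis length_psi rotate_conv_mod)
  moreover have "e dvd k \<longleftrightarrow> e dvd k mod length w"
    using \<open>e dvd length w\<close> by (simp add: dvd_mod_iff)
  moreover have "k mod length w < length w" using \<open>r > 0\<close> \<open>x \<noteq> []\<close> w by simp
  ultimately show ?thesis using small e_def by simp
qed

lemma le_rep_num:
  assumes "w \<noteq> []" and "w = concat (replicate q y)"
  shows "q \<le> rep_num w"
proof -
  have "r \<le> length w" if "w = concat (replicate r x)" for r x
    using that assms(1) by (cases x) auto
  then show ?thesis
    unfolding rep_num_def using assms(2) by (blast intro: Greatest_le_nat)
qed

lemma primitive_orbit_phi_iff:
  assumes "a < b" and "b < n" and "v < n"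
    and w: "w = concat (replicate r x)" and "x \<noteq> []"
    and maximal: "\<And>q y. w = concat (replicate q y) \<Longrightarrow> q \<le> r"
    and closed: "r * step_sum a b x = W * n"
  shows "primitive_orbit n a b (phi n a b w v) \<longleftrightarrow> gcd r W = 1"
    and "is_circuit n a b c' \<Longrightarrow> t > 0 \<Longrightarrow> phi n a b w v = orbit (cpow c' t) \<Longrightarrow>
           primitive_orbit n a b (orbit c') \<longleftrightarrow> t = gcd r W"
proof -
  define e where "e = length x * (r div gcd r W)"
  define c where "c = psi n a b w v"
  have "r > 0" using maximal[of 1 w] by simp
  then have "e > 0" using \<open>x \<noteq> []\<close> by (simp add: e_def div_greater_zero_iff gcd_le1_nat)
  have "w \<noteq> []" using \<open>r > 0\<close> \<open>x \<noteq> []\<close> w by simp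
  then have "is_circuit n a b c"
    unfolding c_def using is_circuit_psi \<open>v < n\<close> w closed by simp
  have period: "\<And>k. rotate k c = c \<longleftrightarrow> e dvd k" unfolding c_def e_def
    by (rule rotate_psi_fixed_iff_dvd[OF assms])
  have "length c = gcd r W * e"
    using w by (simp add: c_def e_def mult.commute mult.left_commute)
  have "primitive_orbit n a b (phi n a b w v) \<longleftrightarrow> e = length c"
    unfolding phi_def c_def[symmetric]
    by (rule primitive_orbit_iff_period[OF \<open>is_circuit n a b c\<close> \<open>e > 0\<close> period])
  then show "primitive_orbit n a b (phi n a b w v) \<longleftrightarrow> gcd r W = 1"
    using \<open>length c = gcd r W * e\<close> \<open>e > 0\<close> by auto
  assume "is_circuit n a b c'" and "t > 0" and "phi n a b w v = orbit (cpow c' t)"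
  then have orbit: "orbit c = orbit (cpow c' t)" by (simp add: phi_def c_def)
  have "primitive_orbit n a b (orbit c') \<longleftrightarrow> e = length c'"
    using orbit_cpow_rotate_fixed_iff[OF orbit \<open>t > 0\<close>] period
    by (intro primitive_orbit_iff_period[OF \<open>is_circuit n a b c'\<close> \<open>e > 0\<close>]) simp
  moreover have "t * length c' = gcd r W * e"
    using length_eq_if_orbit_eq[OF orbit] \<open>length c = gcd r W * e\<close> by (simp add: cpow_def)
  then have "e = length c' \<longleftrightarrow> t = gcd r W"
    using \<open>e > 0\<close> \<open>t > 0\<close> by (metis mult_cancel_left mult_cancel_right neq0_conv)
  ultimately show "primitive_orbit n a b (orbit c') \<longleftrightarrow> t = gcd r W" by simp
qed

theorem mainTheorem12:
  fixes n a b l k r :: nat and \<omega> :: int and w x :: "letter list" and v :: nat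
  assumes "n \<ge> 2" and "0 < a" and "a < b" and "b < n"
    and "gcd n (gcd a b) = 1"
    and "l \<ge> 1" and "k \<le> l"
    and "int l * int a + int k * (int b - int a) = \<omega> * int n"
    and "w \<in> W2 l k"
    and "r = rep_num w" and "w = concat (replicate r x)"
    and "v < n"
  shows "(primitive_orbit n a b (phi n a b w v) \<longleftrightarrow> gcd (int r) \<omega> = 1)
    \<and> (\<forall>c t. is_circuit n a b c \<and> t > 0 \<and> phi n a b w v = orbit (cpow c t) \<longrightarrow>
          (primitive_orbit n a b (orbit c) \<longleftrightarrow> int t = gcd (int r) \<omega>))"
proof -
  have "w \<noteq> []" using assms(6,9) by (auto simp: W2_def)
  then have "x \<noteq> []" using assms(11) by auto
  have maximal: "\<And>q y. w = concat (replicate q y) \<Longrightarrow> q \<le> r"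
    using le_rep_num[OF \<open>w \<noteq> []\<close>] assms(10) by blast
  have displacement: "int (step_sum a b w) = \<omega> * int n"
    using step_sum_count[of a b w] assms(8,9) by (simp add: W2_def)
  moreover have "n > 0" using assms(4) by simp
  ultimately have "\<omega> \<ge> 0" by (metis of_nat_0_le_iff of_nat_0_less_iff zero_le_mult_iff not_le)
  then obtain W where \<omega>: "\<omega> = int W" using nonneg_int_cases by blast
  with displacement have "r * step_sum a b x = W * n"
    using assms(11) by (metis of_nat_eq_iff of_nat_mult step_sum_simps(4))
  note primitive = primitive_orbit_phi_iff[OF assms(3,4,12,11) \<open>x \<noteq> []\<close> maximal this]
  have "gcd (int r) \<omega> = int (gcd r W)" using \<omega> by (simp add: gcd_int_def)
  then show ?thesis using primitive by auto
qed

end
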